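(* For one-variable functions $f,g,b$ consider the lattice equation $$(\ast)\qquad u_{,t}=b\bigl(-f(u-u_{-2})+g(u_{-1}-u)-g(u-u_1)\bigr)+b\bigl(-f(u_2-u)-g(u_{-1}-u)+g(u-u_1)\bigr).$$ For the following choices (with $\gamma$ a nonzero constant), equation $(\ast)$ is point equivalent (related by an invertible change of dependent variable $\tilde u(n)=\phi(u(n))$ applied at every site, such as $e^u\mapsto u$ or an affine rescaling, together with a constant rescaling of $t$) to the indicated equation: Case (A): $f(x)=-2\gamma/x$, $g(x)=\gamma/x$, $b(x)=1/x$; equivalent to $$\tfrac12u_{,t}=\frac{1}{\frac{2}{u_2-u}+\frac{1}{u-u_1}+\frac{1}{u-u_{-1}}}-\frac{1}{\frac{2}{u_{-2}-u}+\frac{1}{u-u_1}+\frac{1}{u-u_{-1}}}.$$ Case (C): $f(x)=\log\frac{x-2\gamma}{x+2\gamma}$, $g(x)=\log\frac{x+\gamma}{x-\gamma}$, $b(x)=\frac1{e^x-1}$; equivalent to $$\tfrac14u_{,t}=\frac{1}{\frac{(u_2-u+2)(u_1-u-1)(u_{-1}-u-1)}{(u_2-u-2)(u_1-u+1)(u_{-1}-u+1)}-1}+\frac{1}{\frac{(u_{-2}-u-2)(u_1-u+1)(u_{-1}-u+1)}{(u_{-2}-u+2)(u_1-u-1)(u_{-1}-u-1)}-1}.$$ Case (D): $f(x)=-\log(1+1/x)$, $g(x)=\log x$, $b(x)=\frac1{e^x+1}$; equivalent to $$u_{,t}=\frac{u-u_{-1}}{u_1-u_{-1}+\frac{u-u_1}{u-u_2}}-\frac{u-u_1}{u_1-u_{-1}+\frac{u-u_{-1}}{u-u_{-2}}}.$$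 Case (F): $f(x)=\log(e^{-x}-1)$, $g(x)=\log(e^x-1)$, $b(x)=e^{-x}$; equivalent to $$u_{,t}=u\frac{(1-\frac{u}{u_2})(1-\frac{u_{-1}}{u})}{1-\frac{u}{u_1}}+u\frac{(1-\frac{u_{-2}}{u})(1-\frac{u}{u_1})}{1-\frac{u_{-1}}{u}}.$$ Case (H) at parameter $0$: $f(x)=\log(e^{-x}-1)$, $g(x)=\log(e^x+1)$, $b(x)=e^{-x}$; equivalent to $$u_{,t}=u\frac{(1-\frac{u}{u_2})(1+\frac{u_{-1}}{u})}{1+\frac{u}{u_1}}+u\frac{(1-\frac{u_{-2}}{u})(1+\frac{u}{u_1})}{1+\frac{u_{-1}}{u}}.$$ Case (I): $f(x)=\log\frac{\gamma^{-2}e^x-1}{e^x-\gamma^{-2}}$, $g(x)=\log\frac{\gamma e^x-1}{e^x-\gamma}$, $b(x)=\frac1{e^x-1}$; equivalent to $$-\frac{1}{1+\gamma^2}u_{,t}=\frac{(u-\gamma u_{-1})(u-\gamma u_1)(u-\gamma^{-2}u_2)}{(\gamma u_{-1}-u)(\gamma u_1-u_2)-(\gamma u-u_1)(u_{-1}-\gamma u_2)}-\frac{(u-\gamma^{-1}u_{-1})(u-\gamma^{-1}u_1)(u-\gamma^2u_{-2})}{(\gamma u_{-2}-u_{-1})(\gamma u-u_1)-(\gamma u_{-1}-u)(u_{-2}-\gamma u_1)}.$$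
   Context: Here $u=u(n,t)$, $n\in\mathbb Z$, $u_m=u(n+m,t)$, and $u_{,t}=\partial u/\partial t$. Equation $(\ast)$ is the scalar second-order lattice equation obtained from the sum of two commuting continuous symmetries of a shift-invariant 7-point equation on the triangular lattice. *)

theory Defs
  imports "HOL-Analysis.Analysis"
begin

text \<open>A configuration around a lattice site is a function v :: int \<Rightarrow> real with
  v m = u_m = u(n+m,t); so v 0 = u, v 1 = u_1, v (-1) = u_{-1}, etc.\<close>

definition lattice_rhs ::
  "(real \<Rightarrow> real) \<Rightarrow> (real \<Rightarrow> real) \<Rightarrow> (real \<Rightarrow> real) \<Rightarrow> (int \<Rightarrow> real) \<Rightarrow> real" where
  "lattice_rhs f g b v =
     b (- f (v 0 - v (-2)) + g (v (-1) - v 0) - g (v 0 - v 1))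
   + b (- f (v 2 - v 0) - g (v (-1) - v 0) + g (v 0 - v 1))"

definition admissible ::
  "(real \<Rightarrow> real) \<Rightarrow> real set \<Rightarrow> (real \<Rightarrow> real) \<Rightarrow> real set \<Rightarrow> real set \<Rightarrow> (int \<Rightarrow> real) \<Rightarrow> bool" where
  "admissible f Df g Dg Db v \<longleftrightarrow>
     v 0 - v (-2) \<in> Df \<and> v 2 - v 0 \<in> Df \<and> v (-1) - v 0 \<in> Dg \<and> v 0 - v 1 \<in> Dg \<and>
     - f (v 0 - v (-2)) + g (v (-1) - v 0) - g (v 0 - v 1) \<in> Db \<and>
     - f (v 2 - v 0) - g (v (-1) - v 0) + g (v 0 - v 1) \<in> Db"

definition solves_lattice ::
  "(real \<Rightarrow> real) \<Rightarrow> (real \<Rightarrow> real) \<Rightarrow> (real \<Rightarrow> real) \<Rightarrow> (int \<Rightarrow> real \<Rightarrow> real) \<Rightarrow> bool" where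
  "solves_lattice f g b u \<longleftrightarrow>
     (\<forall>n t. ((\<lambda>s. u n s) has_real_derivative lattice_rhs f g b (\<lambda>m. u (n + m) t)) (at t))"

definition solves_target ::
  "real \<Rightarrow> ((int \<Rightarrow> real) \<Rightarrow> real) \<Rightarrow> (int \<Rightarrow> real \<Rightarrow> real) \<Rightarrow> bool" where
  "solves_target k T w \<longleftrightarrow>
     (\<forall>n s. \<exists>D. ((\<lambda>r. w n r) has_real_derivative D) (at s) \<and> k * D = T (\<lambda>m. w (n + m) s))"

definition point_equivalent ::
  "(real \<Rightarrow> real) \<Rightarrow> real set \<Rightarrow> (real \<Rightarrow> real) \<Rightarrow> real set \<Rightarrow> (real \<Rightarrow> real) \<Rightarrow> real set
   \<Rightarrow> real \<Rightarrow> ((int \<Rightarrow> real) \<Rightarrow> real) \<Rightarrow> bool" where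
  "point_equivalent f Df g Dg b Db k T \<longleftrightarrow>
     (\<exists>\<phi> \<phi>' c. c \<noteq> 0 \<and> inj \<phi> \<and>
        (\<forall>x. (\<phi> has_real_derivative \<phi>' x) (at x) \<and> \<phi>' x \<noteq> 0) \<and>
        (\<forall>u. (\<forall>n t. admissible f Df g Dg Db (\<lambda>m. u (n + m) t)) \<longrightarrow>
             (solves_lattice f g b u \<longleftrightarrow>
              solves_target k T (\<lambda>n s. \<phi> (u n (c * s))))))"

end

theory Submission
  imports Defs
begin

text \<open>Each equivalence is realised by a fixed change of variable \<phi> (the identity,
  u \<mapsto> u/\<gamma>, or u \<mapsto> exp u) together with a constant time rescaling t = c s. By the chain rule,
  w(n,s) = \<phi>(u(n, c s)) solves k \<partial>w/\<partial>s = T(w) exactly when u solves the lattice equation, as soon as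
  the pointwise identity T(\<phi> \<circ> v) = k c \<phi>'(v 0) \<cdot> rhs(v) holds on admissible configurations v;
  the converse direction uses that \<phi> has a continuous inverse on its open range.
  The identities are elementary: in cases (C)--(I) the arguments of b are sums of logarithms whose
  exponentials are products of three rational factors in the shifted variables, and b applied to
  each of them is one of the two summands of T; in case (A) they are \<plusminus>\<gamma> times the reciprocal
  sums occurring in T.\<close>

lemma DERIV_scaled_argument_iff:
  fixes h :: "real \<Rightarrow> real"
  assumes "c \<noteq> 0"
  shows "((\<lambda>s. h (c * s)) has_real_derivative c * D) (at s) \<longleftrightarrow> (h has_real_derivative D) (at (c * s))"
proof
  assume "((\<lambda>s. h (c * s)) has_real_derivative c * D) (at s)"
  then have "((\<lambda>s. h (c * s)) \<circ> (\<lambda>r. r / c) has_real_derivative c * D * (1 / c)) (at (c * s))"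
    using assms by (intro DERIV_chain) (auto intro!: derivative_eq_intros)
  moreover have "(\<lambda>s. h (c * s)) \<circ> (\<lambda>r. r / c) = h"
    using assms by (auto simp: o_def)
  ultimately show "(h has_real_derivative D) (at (c * s))"
    using assms by simp
next
  assume "(h has_real_derivative D) (at (c * s))"
  then have "(h \<circ> (\<lambda>s. c * s) has_real_derivative D * c) (at s)"
    by (intro DERIV_chain) (auto intro!: derivative_eq_intros)
  then show "((\<lambda>s. h (c * s)) has_real_derivative c * D) (at s)"
    by (simp add: o_def mult.commute)
qed

lemma DERIV_cancel_left_inverse:
  fixes \<phi> \<psi> h :: "real \<Rightarrow> real"
  assumes der: "(\<phi> has_real_derivative \<phi>') (at (h t))" and nz: "\<phi>' \<noteq> 0"
    and inv: "\<And>x. \<psi> (\<phi> x) = x" and "open (range \<phi>)" and "continuous_on (range \<phi>) \<psi>"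
    and comp: "((\<lambda>s. \<phi> (h s)) has_real_derivative \<phi>' * D) (at t)"
  shows "(h has_real_derivative D) (at t)"
proof -
  obtain \<epsilon> where "\<epsilon> > 0" and ball: "ball (\<phi> (h t)) \<epsilon> \<subseteq> range \<phi>"
    using \<open>open (range \<phi>)\<close> open_contains_ball by blast
  have "(\<psi> has_real_derivative inverse \<phi>') (at (\<phi> (h t)))"
  proof (rule DERIV_inverse_function[where a = "\<phi> (h t) - \<epsilon>" and b = "\<phi> (h t) + \<epsilon>"])
    show "(\<phi> has_real_derivative \<phi>') (at (\<psi> (\<phi> (h t))))"
      using der by (simp add: inv)
    fix y assume "\<phi> (h t) - \<epsilon> < y" "y < \<phi> (h t) + \<epsilon>"
    then have "y \<in> range \<phi>"
      using ball by (auto simp: dist_real_def)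
    then show "\<phi> (\<psi> y) = y"
      by (auto simp: inv)
  next
    show "isCont \<psi> (\<phi> (h t))"
      using assms by (simp add: continuous_on_eq_continuous_at)
  qed (use nz \<open>\<epsilon> > 0\<close> in auto)
  from DERIV_chain2[OF this comp]
  show ?thesis
    using nz by (simp add: inv mult.assoc[symmetric])
qed

lemma point_equivalentI:
  fixes \<phi> \<psi> \<phi>' :: "real \<Rightarrow> real"
  assumes "c \<noteq> 0" and "k \<noteq> 0"
    and der: "\<And>x. (\<phi> has_real_derivative \<phi>' x) (at x)" and nz: "\<And>x. \<phi>' x \<noteq> 0"
    and inv: "\<And>x. \<psi> (\<phi> x) = x" and "open (range \<phi>)" and "continuous_on (range \<phi>) \<psi>"
    and target: "\<And>v. admissible f Df g Dg Db v \<Longrightarrow>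
        T (\<lambda>m. \<phi> (v m)) = k * c * \<phi>' (v 0) * lattice_rhs f g b v"
  shows "point_equivalent f Df g Dg b Db k T"
  unfolding point_equivalent_def
proof (rule exI[of _ \<phi>], rule exI[of _ \<phi>'], rule exI[of _ c], intro conjI allI impI)
  show "inj \<phi>"
    by (metis inv injI)
  fix u :: "int \<Rightarrow> real \<Rightarrow> real"
  assume adm: "\<forall>n t. admissible f Df g Dg Db (\<lambda>m. u (n + m) t)"
  let ?R = "\<lambda>n t. lattice_rhs f g b (\<lambda>m. u (n + m) t)"
  have target_u: "T (\<lambda>m. \<phi> (u (n + m) t)) = k * (c * \<phi>' (u n t) * ?R n t)" for n t
    using target adm by simp
  have chain: "(u n has_real_derivative ?R n t) (at t) \<longleftrightarrow>
      ((\<lambda>s. \<phi> (u n (c * s))) has_real_derivative c * \<phi>' (u n t) * ?R n t) (at (t / c))" for n t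
  proof -
    have "(u n has_real_derivative ?R n t) (at t) \<longleftrightarrow>
        ((\<lambda>t. \<phi> (u n t)) has_real_derivative \<phi>' (u n t) * ?R n t) (at t)"
    proof
      assume "(u n has_real_derivative ?R n t) (at t)"
      then show "((\<lambda>t. \<phi> (u n t)) has_real_derivative \<phi>' (u n t) * ?R n t) (at t)"
        by (rule DERIV_chain2[OF der])
    qed (rule DERIV_cancel_left_inverse[OF der nz inv \<open>open (range \<phi>)\<close> \<open>continuous_on (range \<phi>) \<psi>\<close>])
    also have "\<dots> \<longleftrightarrow> ((\<lambda>s. \<phi> (u n (c * s))) has_real_derivative c * (\<phi>' (u n t) * ?R n t)) (at (t / c))"
      using DERIV_scaled_argument_iff[OF \<open>c \<noteq> 0\<close>, of "\<lambda>t. \<phi> (u n t)" _ "t / c"] \<open>c \<noteq> 0\<close> by simp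
    finally show ?thesis
      by (simp add: mult.assoc)
  qed
  show "solves_lattice f g b u \<longleftrightarrow> solves_target k T (\<lambda>n s. \<phi> (u n (c * s)))"
    unfolding solves_lattice_def solves_target_def
  proof (intro iffI allI)
    fix n s
    assume "\<forall>n t. (u n has_real_derivative ?R n t) (at t)"
    then show "\<exists>D. ((\<lambda>r. \<phi> (u n (c * r))) has_real_derivative D) (at s) \<and>
        k * D = T (\<lambda>m. \<phi> (u (n + m) (c * s)))"
      using chain[of n "c * s"] target_u[of n "c * s"] \<open>c \<noteq> 0\<close> by auto
  next
    fix n t
    assume "\<forall>n s. \<exists>D. ((\<lambda>r. \<phi> (u n (c * r))) has_real_derivative D) (at s) \<and>
        k * D = T (\<lambda>m. \<phi> (u (n + m) (c * s)))"
    then obtain D where "((\<lambda>r. \<phi> (u n (c * r))) has_real_derivative D) (at (t / c))"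
      and "k * D = T (\<lambda>m. \<phi> (u (n + m) t))"
      using \<open>c \<noteq> 0\<close> by (metis nonzero_mult_div_cancel_left times_divide_eq_right)
    then show "(u n has_real_derivative ?R n t) (at t)"
      using chain[of n t] target_u[of n t] \<open>k \<noteq> 0\<close> by simp
  qed
qed (use assms in auto)

lemma point_equivalent_scaledI:
  assumes "a \<noteq> 0" and "c \<noteq> 0" and "k \<noteq> 0"
    and "\<And>v. admissible f Df g Dg Db v \<Longrightarrow>
        T (\<lambda>m. v m / a) = k * c * (1 / a) * lattice_rhs f g b v"
  shows "point_equivalent f Df g Dg b Db k T"
proof (rule point_equivalentI[where \<phi> = "\<lambda>x. x / a" and \<phi>' = "\<lambda>_. 1 / a" and \<psi> = "\<lambda>y. a * y" and c = c])
  have "range (\<lambda>x. x / a) = UNIV"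
    using \<open>a \<noteq> 0\<close> by (metis surj_def nonzero_mult_div_cancel_left)
  then show "open (range (\<lambda>x. x / a))" "continuous_on (range (\<lambda>x. x / a)) ((*) a)"
    by (auto intro!: continuous_intros)
qed (use assms in \<open>auto intro!: derivative_eq_intros\<close>)

lemma point_equivalent_expI:
  assumes "c \<noteq> 0" and "k \<noteq> 0"
    and "\<And>v. admissible f Df g Dg Db v \<Longrightarrow>
        T (\<lambda>m. exp (v m)) = k * c * exp (v 0) * lattice_rhs f g b v"
  shows "point_equivalent f Df g Dg b Db k T"
proof (rule point_equivalentI[where \<phi> = exp and \<phi>' = exp and \<psi> = ln and c = c])
  have range_exp: "range exp = {0 :: real <..}"
    by (auto simp: image_iff) (metis exp_ln)
  show "open (range (exp :: real \<Rightarrow> real))"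
    unfolding range_exp by simp
  show "continuous_on (range exp) (ln :: real \<Rightarrow> real)"
    unfolding range_exp by (intro continuous_on_ln continuous_on_id) auto
qed (use assms in \<open>auto intro!: derivative_eq_intros\<close>)

lemma point_equivalent_if_none_admissible:
  assumes "\<And>v. \<not> admissible f Df g Dg Db v"
  shows "point_equivalent f Df g Dg b Db k T"
  unfolding point_equivalent_def
  by (rule exI[of _ "\<lambda>x. x"], rule exI[of _ "\<lambda>_. 1"], rule exI[of _ 1]) (use assms in auto)

lemma divide_diff_swap: "x / (a - b) = - (x / (b - a :: real))"
  by (metis minus_diff_eq divide_minus_right)

lemma target_A_eq_lattice_rhs:
  fixes \<gamma> :: real and v :: "int \<Rightarrow> real"
  assumes "\<gamma> \<noteq> 0"
  shows "1 / (2 / (v 2 - v 0) + 1 / (v 0 - v 1) + 1 / (v 0 - v (-1)))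
       - 1 / (2 / (v (-2) - v 0) + 1 / (v 0 - v 1) + 1 / (v 0 - v (-1)))
       = \<gamma> * lattice_rhs (\<lambda>x. - 2 * \<gamma> / x) (\<lambda>x. \<gamma> / x) (\<lambda>x. 1 / x) v"
proof -
  define S where "S = 2 / (v 2 - v 0) + 1 / (v 0 - v 1) + 1 / (v 0 - v (-1))"
  define S' where "S' = 2 / (v (-2) - v 0) + 1 / (v 0 - v 1) + 1 / (v 0 - v (-1))"
  have "- (- 2 * \<gamma> / (v 0 - v (-2))) + \<gamma> / (v (-1) - v 0) - \<gamma> / (v 0 - v 1) = - (\<gamma> * S')"
    "- (- 2 * \<gamma> / (v 2 - v 0)) - \<gamma> / (v (-1) - v 0) + \<gamma> / (v 0 - v 1) = \<gamma> * S"
    unfolding S_def S'_def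
    by (simp_all add: divide_diff_swap[of _ "v (-2)"] divide_diff_swap[of _ "v (-1)"] add_divide_distrib algebra_simps)
  then have "lattice_rhs (\<lambda>x. - 2 * \<gamma> / x) (\<lambda>x. \<gamma> / x) (\<lambda>x. 1 / x) v = (1 / S - 1 / S') / \<gamma>"
    unfolding lattice_rhs_def by (simp add: divide_simps)
  then show ?thesis
    using assms by (simp add: S_def S'_def)
qed

lemma divide_diff_flip: "(y - x - c) / (y - x + c) = (x - y + c) / (x - y - c :: real)"
  by (metis (no_types, opaque_lifting) minus_diff_eq minus_divide_divide diff_conv_add_uminus add.commute minus_add_distrib)

lemma exp_neg_ln_add_ln_diff_ln:
  fixes x y z :: real
  assumes "0 < x" "0 < y" "0 < z"
  shows "exp (- ln x + ln y - ln z) = y / (x * z)"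
  using assms by (simp add: exp_add exp_diff exp_minus divide_inverse)

lemma exp_neg_ln_diff_ln_add_ln:
  fixes x y z :: real
  assumes "0 < x" "0 < y" "0 < z"
  shows "exp (- ln x - ln y + ln z) = z / (x * y)"
  using assms by (simp add: exp_add exp_diff exp_minus divide_inverse)

lemma target_C_eq_lattice_rhs:
  fixes \<gamma> :: real and v :: "int \<Rightarrow> real"
  assumes "\<gamma> \<noteq> 0"
    and A: "0 < (v 0 - v (-2) - 2 * \<gamma>) / (v 0 - v (-2) + 2 * \<gamma>)"
    and E: "0 < (v 2 - v 0 - 2 * \<gamma>) / (v 2 - v 0 + 2 * \<gamma>)"
    and P: "0 < (v (-1) - v 0 + \<gamma>) / (v (-1) - v 0 - \<gamma>)"
    and Q: "0 < (v 0 - v 1 + \<gamma>) / (v 0 - v 1 - \<gamma>)"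
  shows "1 / ((v 2 / \<gamma> - v 0 / \<gamma> + 2) * (v 1 / \<gamma> - v 0 / \<gamma> - 1) * (v (-1) / \<gamma> - v 0 / \<gamma> - 1)
                / ((v 2 / \<gamma> - v 0 / \<gamma> - 2) * (v 1 / \<gamma> - v 0 / \<gamma> + 1) * (v (-1) / \<gamma> - v 0 / \<gamma> + 1)) - 1)
       + 1 / ((v (-2) / \<gamma> - v 0 / \<gamma> - 2) * (v 1 / \<gamma> - v 0 / \<gamma> + 1) * (v (-1) / \<gamma> - v 0 / \<gamma> + 1)
                / ((v (-2) / \<gamma> - v 0 / \<gamma> + 2) * (v 1 / \<gamma> - v 0 / \<gamma> - 1) * (v (-1) / \<gamma> - v 0 / \<gamma> - 1)) - 1)
     = lattice_rhs (\<lambda>x. ln ((x - 2 * \<gamma>) / (x + 2 * \<gamma>))) (\<lambda>x. ln ((x + \<gamma>) / (x - \<gamma>)))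
         (\<lambda>x. 1 / (exp x - 1)) v"
proof -
  have ratio: "(x / \<gamma> - y / \<gamma> + c) / (x / \<gamma> - y / \<gamma> - c) = (x - y + c * \<gamma>) / (x - y - c * \<gamma>)"
    "(x / \<gamma> - y / \<gamma> - c) / (x / \<gamma> - y / \<gamma> + c) = (x - y - c * \<gamma>) / (x - y + c * \<gamma>)" for x y c
  proof -
    have "x / \<gamma> - y / \<gamma> + c = (x - y + c * \<gamma>) / \<gamma>" "x / \<gamma> - y / \<gamma> - c = (x - y - c * \<gamma>) / \<gamma>"
      using \<open>\<gamma> \<noteq> 0\<close> by (simp_all add: field_simps)
    then show "(x / \<gamma> - y / \<gamma> + c) / (x / \<gamma> - y / \<gamma> - c) = (x - y + c * \<gamma>) / (x - y - c * \<gamma>)"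
      "(x / \<gamma> - y / \<gamma> - c) / (x / \<gamma> - y / \<gamma> + c) = (x - y - c * \<gamma>) / (x - y + c * \<gamma>)"
      using \<open>\<gamma> \<noteq> 0\<close> by simp_all
  qed
  have "(v 2 / \<gamma> - v 0 / \<gamma> + 2) * (v 1 / \<gamma> - v 0 / \<gamma> - 1) * (v (-1) / \<gamma> - v 0 / \<gamma> - 1)
        / ((v 2 / \<gamma> - v 0 / \<gamma> - 2) * (v 1 / \<gamma> - v 0 / \<gamma> + 1) * (v (-1) / \<gamma> - v 0 / \<gamma> + 1))
      = (v 2 - v 0 + 2 * \<gamma>) / (v 2 - v 0 - 2 * \<gamma>) * ((v 1 - v 0 - \<gamma>) / (v 1 - v 0 + \<gamma>))
        * ((v (-1) - v 0 - \<gamma>) / (v (-1) - v 0 + \<gamma>))"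
    by (simp only: times_divide_times_eq[symmetric] ratio mult_1)
  also have "\<dots> = (v 2 - v 0 + 2 * \<gamma>) / (v 2 - v 0 - 2 * \<gamma>) * ((v (-1) - v 0 - \<gamma>) / (v (-1) - v 0 + \<gamma>))
        * ((v 0 - v 1 + \<gamma>) / (v 0 - v 1 - \<gamma>))"
    by (simp only: divide_diff_flip[of "v 1"] mult_ac)
  also have "\<dots> = exp (- ln ((v 2 - v 0 - 2 * \<gamma>) / (v 2 - v 0 + 2 * \<gamma>))
      - ln ((v (-1) - v 0 + \<gamma>) / (v (-1) - v 0 - \<gamma>)) + ln ((v 0 - v 1 + \<gamma>) / (v 0 - v 1 - \<gamma>)))"
    unfolding exp_neg_ln_diff_ln_add_ln[OF E P Q] by (simp add: mult_ac)
  finally have Y: "(v 2 / \<gamma> - v 0 / \<gamma> + 2) * (v 1 / \<gamma> - v 0 / \<gamma> - 1) * (v (-1) / \<gamma> - v 0 / \<gamma> - 1)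
        / ((v 2 / \<gamma> - v 0 / \<gamma> - 2) * (v 1 / \<gamma> - v 0 / \<gamma> + 1) * (v (-1) / \<gamma> - v 0 / \<gamma> + 1))
      = exp (- ln ((v 2 - v 0 - 2 * \<gamma>) / (v 2 - v 0 + 2 * \<gamma>))
      - ln ((v (-1) - v 0 + \<gamma>) / (v (-1) - v 0 - \<gamma>)) + ln ((v 0 - v 1 + \<gamma>) / (v 0 - v 1 - \<gamma>)))" .
  have "(v (-2) / \<gamma> - v 0 / \<gamma> - 2) * (v 1 / \<gamma> - v 0 / \<gamma> + 1) * (v (-1) / \<gamma> - v 0 / \<gamma> + 1)
        / ((v (-2) / \<gamma> - v 0 / \<gamma> + 2) * (v 1 / \<gamma> - v 0 / \<gamma> - 1) * (v (-1) / \<gamma> - v 0 / \<gamma> - 1))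
      = (v (-2) - v 0 - 2 * \<gamma>) / (v (-2) - v 0 + 2 * \<gamma>) * ((v 1 - v 0 + \<gamma>) / (v 1 - v 0 - \<gamma>))
        * ((v (-1) - v 0 + \<gamma>) / (v (-1) - v 0 - \<gamma>))"
    by (simp only: times_divide_times_eq[symmetric] ratio mult_1)
  also have "\<dots> = (v 0 - v (-2) + 2 * \<gamma>) / (v 0 - v (-2) - 2 * \<gamma>) * ((v (-1) - v 0 + \<gamma>) / (v (-1) - v 0 - \<gamma>))
        * ((v 0 - v 1 - \<gamma>) / (v 0 - v 1 + \<gamma>))"
    by (simp only: divide_diff_flip mult_ac)
  also have "\<dots> = exp (- ln ((v 0 - v (-2) - 2 * \<gamma>) / (v 0 - v (-2) + 2 * \<gamma>))
      + ln ((v (-1) - v 0 + \<gamma>) / (v (-1) - v 0 - \<gamma>)) - ln ((v 0 - v 1 + \<gamma>) / (v 0 - v 1 - \<gamma>)))"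
    unfolding exp_neg_ln_add_ln_diff_ln[OF A P Q] by (simp add: mult_ac)
  finally show ?thesis
    unfolding lattice_rhs_def Y by simp
qed

lemma target_D_eq_lattice_rhs:
  fixes v :: "int \<Rightarrow> real"
  assumes A: "v 0 \<noteq> v (-2)" "0 < 1 + 1 / (v 0 - v (-2))" and E: "v 2 \<noteq> v 0" "0 < 1 + 1 / (v 2 - v 0)"
    and P: "0 < v (-1) - v 0" and Q: "0 < v 0 - v 1"
  shows "(v 0 - v (-1)) / (v 1 - v (-1) + (v 0 - v 1) / (v 0 - v 2))
       - (v 0 - v 1) / (v 1 - v (-1) + (v 0 - v (-1)) / (v 0 - v (-2)))
     = lattice_rhs (\<lambda>x. - ln (1 + 1 / x)) ln (\<lambda>x. 1 / (exp x + 1)) v"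
proof -
  have "exp (ln (1 + 1 / (v 0 - v (-2))) + ln (v (-1) - v 0) - ln (v 0 - v 1)) + 1
      = (1 + 1 / (v 0 - v (-2))) * (v (-1) - v 0) / (v 0 - v 1) + 1"
    using A P Q by (simp add: exp_add exp_diff)
  also have "\<dots> = - (v 1 - v (-1) + (v 0 - v (-1)) / (v 0 - v (-2))) / (v 0 - v 1)"
    using A Q by (simp add: divide_simps) (simp add: algebra_simps)
  finally have X: "exp (ln (1 + 1 / (v 0 - v (-2))) + ln (v (-1) - v 0) - ln (v 0 - v 1)) + 1
      = - (v 1 - v (-1) + (v 0 - v (-1)) / (v 0 - v (-2))) / (v 0 - v 1)" .
  have "exp (ln (1 + 1 / (v 2 - v 0)) - ln (v (-1) - v 0) + ln (v 0 - v 1)) + 1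
      = (1 + 1 / (v 2 - v 0)) * (v 0 - v 1) / (v (-1) - v 0) + 1"
    using E P Q by (simp add: exp_add exp_diff)
  also have "\<dots> = (v 1 - v (-1) + (v 0 - v 1) / (v 0 - v 2)) / (v 0 - v (-1))"
    using E P by (simp add: divide_simps) (simp add: algebra_simps)
  finally have Y: "exp (ln (1 + 1 / (v 2 - v 0)) - ln (v (-1) - v 0) + ln (v 0 - v 1)) + 1
      = (v 1 - v (-1) + (v 0 - v 1) / (v 0 - v 2)) / (v 0 - v (-1))" .
  show ?thesis
    unfolding lattice_rhs_def using X Y by (simp add: minus_divide_right)
qed

lemma target_F_eq_lattice_rhs:
  fixes v :: "int \<Rightarrow> real"
  assumes A: "0 < exp (- (v 0 - v (-2))) - 1" and E: "0 < exp (- (v 2 - v 0)) - 1"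
    and P: "0 < exp (v (-1) - v 0) - 1" and Q: "0 < exp (v 0 - v 1) - 1"
  shows "exp (v 0) * ((1 - exp (v 0) / exp (v 2)) * (1 - exp (v (-1)) / exp (v 0))) / (1 - exp (v 0) / exp (v 1))
       + exp (v 0) * ((1 - exp (v (-2)) / exp (v 0)) * (1 - exp (v 0) / exp (v 1))) / (1 - exp (v (-1)) / exp (v 0))
     = - exp (v 0) * lattice_rhs (\<lambda>x. ln (exp (- x) - 1)) (\<lambda>x. ln (exp x - 1)) (\<lambda>x. exp (- x)) v"
proof -
  have X: "exp (- (- ln (exp (- (v 0 - v (-2))) - 1) + ln (exp (v (-1) - v 0) - 1) - ln (exp (v 0 - v 1) - 1)))
      = - ((1 - exp (v (-2)) / exp (v 0)) * (1 - exp (v 0) / exp (v 1)) / (1 - exp (v (-1)) / exp (v 0)))"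
    using A P Q by (simp add: exp_add exp_diff exp_minus field_simps)
  have Y: "exp (- (- ln (exp (- (v 2 - v 0)) - 1) - ln (exp (v (-1) - v 0) - 1) + ln (exp (v 0 - v 1) - 1)))
      = - ((1 - exp (v 0) / exp (v 2)) * (1 - exp (v (-1)) / exp (v 0)) / (1 - exp (v 0) / exp (v 1)))"
    using E P Q by (simp add: exp_add exp_diff exp_minus field_simps)
  have "w * x / y + w * x' / y' = - w * (- (x' / y') + - (x / y))" for w x y x' y' :: real
    by (simp add: algebra_simps)
  then show ?thesis
    unfolding lattice_rhs_def X Y by simp
qed

lemma target_H_eq_lattice_rhs:
  fixes v :: "int \<Rightarrow> real"
  assumes A: "0 < exp (- (v 0 - v (-2))) - 1" and E: "0 < exp (- (v 2 - v 0)) - 1"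
  shows "exp (v 0) * ((1 - exp (v 0) / exp (v 2)) * (1 + exp (v (-1)) / exp (v 0))) / (1 + exp (v 0) / exp (v 1))
       + exp (v 0) * ((1 - exp (v (-2)) / exp (v 0)) * (1 + exp (v 0) / exp (v 1))) / (1 + exp (v (-1)) / exp (v 0))
     = - exp (v 0) * lattice_rhs (\<lambda>x. ln (exp (- x) - 1)) (\<lambda>x. ln (exp x + 1)) (\<lambda>x. exp (- x)) v"
proof -
  have P: "0 < exp (v (-1) - v 0) + 1" and Q: "0 < exp (v 0 - v 1) + 1"
    by (simp_all add: add_pos_pos)
  have X: "exp (- (- ln (exp (- (v 0 - v (-2))) - 1) + ln (exp (v (-1) - v 0) + 1) - ln (exp (v 0 - v 1) + 1)))
      = - ((1 - exp (v (-2)) / exp (v 0)) * (1 + exp (v 0) / exp (v 1)) / (1 + exp (v (-1)) / exp (v 0)))"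
    using A P Q by (simp add: exp_add exp_diff exp_minus) (simp add: divide_simps algebra_simps)
  have Y: "exp (- (- ln (exp (- (v 2 - v 0)) - 1) - ln (exp (v (-1) - v 0) + 1) + ln (exp (v 0 - v 1) + 1)))
      = - ((1 - exp (v 0) / exp (v 2)) * (1 + exp (v (-1)) / exp (v 0)) / (1 + exp (v 0) / exp (v 1)))"
    using E P Q by (simp add: exp_add exp_diff exp_minus) (simp add: divide_simps algebra_simps)
  have "w * x / y + w * x' / y' = - w * (- (x' / y') + - (x / y))" for w x y x' y' :: real
    by (simp add: algebra_simps)
  then show ?thesis
    unfolding lattice_rhs_def X Y by simp
qed

lemma case_I_denominator_identity:
  fixes \<gamma> U A P Q :: real
  shows "(\<gamma>\<^sup>2 * U - A) * (\<gamma> * P - U) * (U - \<gamma> * Q) - (U - \<gamma>\<^sup>2 * A) * (P - \<gamma> * U) * (\<gamma> * U - Q)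
       = (1 - \<gamma>\<^sup>2) * U * ((\<gamma> * A - P) * (\<gamma> * U - Q) - (\<gamma> * P - U) * (A - \<gamma> * Q))"
  by (simp add: power2_eq_square algebra_simps)

text \<open>U, A, P, Q, E stand for exp (v 0), exp (v (-2)), exp (v (-1)), exp (v 1), exp (v 2).
  The two arguments of b exponentiate to ratios N/D of cubic polynomials, and by the identity
  above N - D is a multiple of the denominator of the corresponding summand of the target.\<close>

lemma case_I_rational_identity:
  fixes \<gamma> U A P Q E :: real
  assumes "\<gamma> \<noteq> 0" "\<gamma>\<^sup>2 \<noteq> 1" and pos: "0 < U" "0 < A" "0 < P" "0 < Q" "0 < E"
    and FA: "0 < (U / A / \<gamma>\<^sup>2 - 1) / (U / A - 1 / \<gamma>\<^sup>2)"
    and FE: "0 < (E / U / \<gamma>\<^sup>2 - 1) / (E / U - 1 / \<gamma>\<^sup>2)"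
    and GP: "0 < (\<gamma> * (P / U) - 1) / (P / U - \<gamma>)"
    and GQ: "0 < (\<gamma> * (U / Q) - 1) / (U / Q - \<gamma>)"
  shows "(U - \<gamma> * P) * (U - \<gamma> * Q) * (U - E / \<gamma>\<^sup>2)
           / ((\<gamma> * P - U) * (\<gamma> * Q - E) - (\<gamma> * U - Q) * (P - \<gamma> * E))
         - (U - P / \<gamma>) * (U - Q / \<gamma>) * (U - \<gamma>\<^sup>2 * A)
           / ((\<gamma> * A - P) * (\<gamma> * U - Q) - (\<gamma> * P - U) * (A - \<gamma> * Q))
    = (1 - \<gamma>\<^sup>2) / \<gamma>\<^sup>2 * U *
      (1 / ((\<gamma> * (P / U) - 1) / (P / U - \<gamma>)
             / ((U / A / \<gamma>\<^sup>2 - 1) / (U / A - 1 / \<gamma>\<^sup>2) * ((\<gamma> * (U / Q) - 1) / (U / Q - \<gamma>))) - 1)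
     + 1 / ((\<gamma> * (U / Q) - 1) / (U / Q - \<gamma>)
             / ((E / U / \<gamma>\<^sup>2 - 1) / (E / U - 1 / \<gamma>\<^sup>2) * ((\<gamma> * (P / U) - 1) / (P / U - \<gamma>))) - 1))"
proof -
  have nonzero: "\<gamma>\<^sup>2 \<noteq> 0" "1 - \<gamma>\<^sup>2 \<noteq> 0"
    using assms(1,2) by auto
  have r1: "(U / A / \<gamma>\<^sup>2 - 1) / (U / A - 1 / \<gamma>\<^sup>2) = (U - \<gamma>\<^sup>2 * A) / (\<gamma>\<^sup>2 * U - A)"
   and r2: "(E / U / \<gamma>\<^sup>2 - 1) / (E / U - 1 / \<gamma>\<^sup>2) = (E - \<gamma>\<^sup>2 * U) / (\<gamma>\<^sup>2 * E - U)"
   and r3: "(\<gamma> * (P / U) - 1) / (P / U - \<gamma>) = (\<gamma> * P - U) / (P - \<gamma> * U)"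
   and r4: "(\<gamma> * (U / Q) - 1) / (U / Q - \<gamma>) = (\<gamma> * U - Q) / (U - \<gamma> * Q)"
    using nonzero pos by (simp_all add: divide_simps) (simp_all add: algebra_simps)
  define DX where "DX = (U - \<gamma>\<^sup>2 * A) * (P - \<gamma> * U) * (\<gamma> * U - Q)"
  define DY where "DY = (E - \<gamma>\<^sup>2 * U) * (\<gamma> * P - U) * (U - \<gamma> * Q)"
  define D1 where "D1 = (\<gamma> * P - U) * (\<gamma> * Q - E) - (\<gamma> * U - Q) * (P - \<gamma> * E)"
  define D2 where "D2 = (\<gamma> * A - P) * (\<gamma> * U - Q) - (\<gamma> * P - U) * (A - \<gamma> * Q)"
  have "DX \<noteq> 0" "DY \<noteq> 0"
    using FA FE GP GQ unfolding r1 r2 r3 r4 DX_def DY_def by auto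
  have "(\<gamma> * P - U) / (P - \<gamma> * U) / ((U - \<gamma>\<^sup>2 * A) / (\<gamma>\<^sup>2 * U - A) * ((\<gamma> * U - Q) / (U - \<gamma> * Q))) - 1
      = (1 - \<gamma>\<^sup>2) * U * D2 / DX"
    using \<open>DX \<noteq> 0\<close> case_I_denominator_identity[of \<gamma> U A P Q]
    unfolding DX_def D2_def by (simp add: divide_simps) (simp add: algebra_simps)
  then have X: "1 / ((\<gamma> * P - U) / (P - \<gamma> * U) / ((U - \<gamma>\<^sup>2 * A) / (\<gamma>\<^sup>2 * U - A) * ((\<gamma> * U - Q) / (U - \<gamma> * Q))) - 1)
      = DX / ((1 - \<gamma>\<^sup>2) * U * D2)"
    by simp
  have "(\<gamma> * U - Q) / (U - \<gamma> * Q) / ((E - \<gamma>\<^sup>2 * U) / (\<gamma>\<^sup>2 * E - U) * ((\<gamma> * P - U) / (P - \<gamma> * U))) - 1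
      = (1 - \<gamma>\<^sup>2) * U * D1 / DY"
    using \<open>DY \<noteq> 0\<close> case_I_denominator_identity[of \<gamma> U E Q P]
    unfolding DY_def D1_def by (simp add: divide_simps) (simp add: algebra_simps)
  then have Y: "1 / ((\<gamma> * U - Q) / (U - \<gamma> * Q) / ((E - \<gamma>\<^sup>2 * U) / (\<gamma>\<^sup>2 * E - U) * ((\<gamma> * P - U) / (P - \<gamma> * U))) - 1)
      = DY / ((1 - \<gamma>\<^sup>2) * U * D1)"
    by simp
  have T1: "(U - \<gamma> * P) * (U - \<gamma> * Q) * (U - E / \<gamma>\<^sup>2) / D1 = DY / (\<gamma>\<^sup>2 * D1)"
   and T2: "(U - P / \<gamma>) * (U - Q / \<gamma>) * (U - \<gamma>\<^sup>2 * A) / D2 = - (DX / (\<gamma>\<^sup>2 * D2))"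
    using nonzero \<open>\<gamma> \<noteq> 0\<close> unfolding DX_def DY_def
    by (simp_all add: divide_simps) (simp_all add: power2_eq_square algebra_simps)
  have "k / s * U * (a / (k * U * c) + b / (k * U * d)) = a / (s * c) + b / (s * d)"
    if "k \<noteq> 0" for k s a b c d
    using that pos by (simp add: distrib_left)
  from this[OF \<open>1 - \<gamma>\<^sup>2 \<noteq> 0\<close>] show ?thesis
    unfolding r1 r2 r3 r4 X Y D1_def[symmetric] D2_def[symmetric] T1 T2 by simp
qed

lemma target_I_eq_lattice_rhs:
  fixes \<gamma> :: real and v :: "int \<Rightarrow> real"
  assumes "\<gamma> \<noteq> 0" "\<gamma>\<^sup>2 \<noteq> 1"
    and A: "0 < (exp (v 0 - v (-2)) / \<gamma>\<^sup>2 - 1) / (exp (v 0 - v (-2)) - 1 / \<gamma>\<^sup>2)"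
    and E: "0 < (exp (v 2 - v 0) / \<gamma>\<^sup>2 - 1) / (exp (v 2 - v 0) - 1 / \<gamma>\<^sup>2)"
    and P: "0 < (\<gamma> * exp (v (-1) - v 0) - 1) / (exp (v (-1) - v 0) - \<gamma>)"
    and Q: "0 < (\<gamma> * exp (v 0 - v 1) - 1) / (exp (v 0 - v 1) - \<gamma>)"
  shows "(exp (v 0) - \<gamma> * exp (v (-1))) * (exp (v 0) - \<gamma> * exp (v 1)) * (exp (v 0) - exp (v 2) / \<gamma>\<^sup>2)
           / ((\<gamma> * exp (v (-1)) - exp (v 0)) * (\<gamma> * exp (v 1) - exp (v 2))
              - (\<gamma> * exp (v 0) - exp (v 1)) * (exp (v (-1)) - \<gamma> * exp (v 2)))
         - (exp (v 0) - exp (v (-1)) / \<gamma>) * (exp (v 0) - exp (v 1) / \<gamma>) * (exp (v 0) - \<gamma>\<^sup>2 * exp (v (-2)))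
           / ((\<gamma> * exp (v (-2)) - exp (v (-1))) * (\<gamma> * exp (v 0) - exp (v 1))
              - (\<gamma> * exp (v (-1)) - exp (v 0)) * (exp (v (-2)) - \<gamma> * exp (v 1)))
     = (1 - \<gamma>\<^sup>2) / \<gamma>\<^sup>2 * exp (v 0) *
       lattice_rhs (\<lambda>x. ln ((exp x / \<gamma>\<^sup>2 - 1) / (exp x - 1 / \<gamma>\<^sup>2))) (\<lambda>x. ln ((\<gamma> * exp x - 1) / (exp x - \<gamma>)))
         (\<lambda>x. 1 / (exp x - 1)) v"
proof -
  have "lattice_rhs (\<lambda>x. ln ((exp x / \<gamma>\<^sup>2 - 1) / (exp x - 1 / \<gamma>\<^sup>2))) (\<lambda>x. ln ((\<gamma> * exp x - 1) / (exp x - \<gamma>)))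
         (\<lambda>x. 1 / (exp x - 1)) v
    = 1 / ((\<gamma> * exp (v (-1) - v 0) - 1) / (exp (v (-1) - v 0) - \<gamma>)
           / ((exp (v 0 - v (-2)) / \<gamma>\<^sup>2 - 1) / (exp (v 0 - v (-2)) - 1 / \<gamma>\<^sup>2)
              * ((\<gamma> * exp (v 0 - v 1) - 1) / (exp (v 0 - v 1) - \<gamma>))) - 1)
    + 1 / ((\<gamma> * exp (v 0 - v 1) - 1) / (exp (v 0 - v 1) - \<gamma>)
           / ((exp (v 2 - v 0) / \<gamma>\<^sup>2 - 1) / (exp (v 2 - v 0) - 1 / \<gamma>\<^sup>2)
              * ((\<gamma> * exp (v (-1) - v 0) - 1) / (exp (v (-1) - v 0) - \<gamma>))) - 1)"
    by (simp only: lattice_rhs_def exp_neg_ln_add_ln_diff_ln[OF A P Q] exp_neg_ln_diff_ln_add_ln[OF E P Q])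
  then show ?thesis
    unfolding exp_diff
    by (rule ssubst, intro case_I_rational_identity) (use assms[unfolded exp_diff] in auto)
qed

text \<open>For \<gamma> = 1 both f and g vanish on their domains, so b would be evaluated at 0; for
  \<gamma> = -1 the argument of the logarithm in g is identically -1.\<close>

lemma not_admissible_I_degenerate:
  fixes \<gamma> :: real
  assumes "\<gamma>\<^sup>2 = 1"
  shows "\<not> admissible (\<lambda>x. ln ((exp x / \<gamma>\<^sup>2 - 1) / (exp x - 1 / \<gamma>\<^sup>2)))
       {x. exp x - 1 / \<gamma>\<^sup>2 \<noteq> 0 \<and> (exp x / \<gamma>\<^sup>2 - 1) / (exp x - 1 / \<gamma>\<^sup>2) > 0}
     (\<lambda>x. ln ((\<gamma> * exp x - 1) / (exp x - \<gamma>)))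
       {x. exp x - \<gamma> \<noteq> 0 \<and> (\<gamma> * exp x - 1) / (exp x - \<gamma>) > 0}
     {x. exp x - 1 \<noteq> 0} v"
proof -
  from \<open>\<gamma>\<^sup>2 = 1\<close> have "\<gamma> = 1 \<or> \<gamma> = -1"
    by (simp add: power2_eq_1_iff)
  then show ?thesis
  proof
    assume "\<gamma> = 1"
    then show ?thesis
      by (auto simp: admissible_def)
  next
    assume "\<gamma> = -1"
    moreover have "(- exp x - 1) / (exp x + 1) = -1" for x :: real
      using exp_gt_zero[of x] by (subst divide_eq_minus_1_iff) linarith
    ultimately show ?thesis
      by (simp add: admissible_def)
  qed
qed

theorem mainTheorem4:
  fixes \<gamma> :: real
  assumes "\<gamma> \<noteq> 0"
  shows "
   \<comment> \<open>Case (A)\<close>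
   (point_equivalent (\<lambda>x. - 2 * \<gamma> / x) {x. x \<noteq> 0} (\<lambda>x. \<gamma> / x) {x. x \<noteq> 0}
     (\<lambda>x. 1 / x) {x. x \<noteq> 0} (1/2)
     (\<lambda>v. 1 / (2 / (v 2 - v 0) + 1 / (v 0 - v 1) + 1 / (v 0 - v (-1)))
         - 1 / (2 / (v (-2) - v 0) + 1 / (v 0 - v 1) + 1 / (v 0 - v (-1)))))
   \<and>
   \<comment> \<open>Case (C)\<close>
   (point_equivalent
     (\<lambda>x. ln ((x - 2 * \<gamma>) / (x + 2 * \<gamma>))) {x. x + 2 * \<gamma> \<noteq> 0 \<and> (x - 2 * \<gamma>) / (x + 2 * \<gamma>) > 0}
     (\<lambda>x. ln ((x + \<gamma>) / (x - \<gamma>))) {x. x - \<gamma> \<noteq> 0 \<and> (x + \<gamma>) / (x - \<gamma>) > 0}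
     (\<lambda>x. 1 / (exp x - 1)) {x. exp x - 1 \<noteq> 0} (1/4)
     (\<lambda>v. 1 / ((v 2 - v 0 + 2) * (v 1 - v 0 - 1) * (v (-1) - v 0 - 1)
                / ((v 2 - v 0 - 2) * (v 1 - v 0 + 1) * (v (-1) - v 0 + 1)) - 1)
         + 1 / ((v (-2) - v 0 - 2) * (v 1 - v 0 + 1) * (v (-1) - v 0 + 1)
                / ((v (-2) - v 0 + 2) * (v 1 - v 0 - 1) * (v (-1) - v 0 - 1)) - 1)))
   \<and>
   \<comment> \<open>Case (D)\<close>
   (point_equivalent
     (\<lambda>x. - ln (1 + 1 / x)) {x. x \<noteq> 0 \<and> 1 + 1 / x > 0}
     (\<lambda>x. ln x) {x. x > 0}
     (\<lambda>x. 1 / (exp x + 1)) UNIV 1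
     (\<lambda>v. (v 0 - v (-1)) / (v 1 - v (-1) + (v 0 - v 1) / (v 0 - v 2))
         - (v 0 - v 1) / (v 1 - v (-1) + (v 0 - v (-1)) / (v 0 - v (-2)))))
   \<and>
   \<comment> \<open>Case (F)\<close>
   (point_equivalent
     (\<lambda>x. ln (exp (- x) - 1)) {x. exp (- x) - 1 > 0}
     (\<lambda>x. ln (exp x - 1)) {x. exp x - 1 > 0}
     (\<lambda>x. exp (- x)) UNIV 1
     (\<lambda>v. v 0 * ((1 - v 0 / v 2) * (1 - v (-1) / v 0)) / (1 - v 0 / v 1)
         + v 0 * ((1 - v (-2) / v 0) * (1 - v 0 / v 1)) / (1 - v (-1) / v 0)))
   \<and>
   \<comment> \<open>Case (H) at parameter 0\<close>
   (point_equivalent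
     (\<lambda>x. ln (exp (- x) - 1)) {x. exp (- x) - 1 > 0}
     (\<lambda>x. ln (exp x + 1)) {x. exp x + 1 > 0}
     (\<lambda>x. exp (- x)) UNIV 1
     (\<lambda>v. v 0 * ((1 - v 0 / v 2) * (1 + v (-1) / v 0)) / (1 + v 0 / v 1)
         + v 0 * ((1 - v (-2) / v 0) * (1 + v 0 / v 1)) / (1 + v (-1) / v 0)))
   \<and>
   \<comment> \<open>Case (I)\<close>
   (point_equivalent
     (\<lambda>x. ln ((exp x / \<gamma>\<^sup>2 - 1) / (exp x - 1 / \<gamma>\<^sup>2)))
       {x. exp x - 1 / \<gamma>\<^sup>2 \<noteq> 0 \<and> (exp x / \<gamma>\<^sup>2 - 1) / (exp x - 1 / \<gamma>\<^sup>2) > 0}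
     (\<lambda>x. ln ((\<gamma> * exp x - 1) / (exp x - \<gamma>)))
       {x. exp x - \<gamma> \<noteq> 0 \<and> (\<gamma> * exp x - 1) / (exp x - \<gamma>) > 0}
     (\<lambda>x. 1 / (exp x - 1)) {x. exp x - 1 \<noteq> 0}
     (- 1 / (1 + \<gamma>\<^sup>2))
     (\<lambda>v. (v 0 - \<gamma> * v (-1)) * (v 0 - \<gamma> * v 1) * (v 0 - v 2 / \<gamma>\<^sup>2)
           / ((\<gamma> * v (-1) - v 0) * (\<gamma> * v 1 - v 2) - (\<gamma> * v 0 - v 1) * (v (-1) - \<gamma> * v 2))
         - (v 0 - v (-1) / \<gamma>) * (v 0 - v 1 / \<gamma>) * (v 0 - \<gamma>\<^sup>2 * v (-2))
           / ((\<gamma> * v (-2) - v (-1)) * (\<gamma> * v 0 - v 1) - (\<gamma> * v (-1) - v 0) * (v (-2) - \<gamma> * v 1))))"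
  apply (intro conjI)
  subgoal
    using target_A_eq_lattice_rhs[OF assms]
    by (intro point_equivalent_scaledI[where a = 1 and c = "2 * \<gamma>"]) (simp_all add: assms)
  subgoal
    using target_C_eq_lattice_rhs[OF assms]
    by (intro point_equivalent_scaledI[where a = \<gamma> and c = "4 * \<gamma>"]) (simp_all add: assms admissible_def)
  subgoal
    using target_D_eq_lattice_rhs
    by (intro point_equivalent_scaledI[where a = 1 and c = 1]) (simp_all add: admissible_def)
  subgoal
    using target_F_eq_lattice_rhs
    by (intro point_equivalent_expI[where c = "-1"]) (simp_all add: admissible_def)
  subgoal
    using target_H_eq_lattice_rhs
    by (intro point_equivalent_expI[where c = "-1"]) (simp_all add: admissible_def)
  subgoal
  proof (cases "\<gamma>\<^sup>2 = 1")
    case True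
    then show ?thesis
      by (intro point_equivalent_if_none_admissible not_admissible_I_degenerate)
  next
    case False
    have "1 + \<gamma>\<^sup>2 \<noteq> 0"
      using zero_le_power2[of \<gamma>] by linarith
    with False show ?thesis
      using target_I_eq_lattice_rhs[OF assms False]
      by (intro point_equivalent_expI[where c = "(\<gamma>\<^sup>2 - 1) * (1 + \<gamma>\<^sup>2) / \<gamma>\<^sup>2"])
        (simp_all add: assms admissible_def)
  qed
  done

end
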